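(* Fix $n\ge1$. For each $\delta\in\mathrm{MAD}(c^\times)$, the word $\Psi(\delta)$ lies in $\overline{\mathcal{M}}_{n+1}$ and $|\delta|=n-\#_{\mathtt{U}}(\Psi(\delta))$.
   Context: Place points $1,\ldots,n+1$ left to right on a horizontal line. An arc is a curve from a point $i$ to a point $j>i$ moving monotonically rightward and passing above or below each of $i+1,\ldots,j-1$; arcs are identified if they have the same endpoints and pass above the same points. A noncrossing arc diagram is a set of arcs that can be drawn so that no two share a left endpoint, no two share a right endpoint, and no two cross in their interiors; $|\delta|$ is its number of arcs. An arc from $i$ to $j$ is $c^\times$-sortable if, for each $k$ with $i<k<j$, it passes above $k$ when $k$ is odd and below $k$ when $k$ is even. $\mathrm{MAD}(c^\times)$ is the set of noncrossing arc diagrams consisting of $c^\times$-sortable arcs that are maximal under inclusion among such diagrams. For $\delta\in\mathrm{MAD}(c^\times)$, $\Psi(\delta)=\mathtt{M}_1\cdots\mathtt{M}_{n+1}$ where $\mathtt{M}_i=\mathtt{U}$ if $i\le n$ and $i+1$ is not the right endpoint of an arc of $\delta$; $\mathtt{M}_i=\mathtt{D}$ if $i\ge2$ and $i-1$ is not the left endpoint of an arc of $\delta$; and $\mathtt{M}_i=\mathtt{H}$ otherwise (it is part of the setup that the first two cases never both apply). A Motzkin path of length $m$ is a word in $\mathtt{U}$ (up step $(1,1)$), $\mathtt{D}$ (down step $(1,-1)$), $\mathtt{H}$ (horizontal step $(1,0)$) of length $m$ with equally many $\mathtt{U}$'s and $\mathtt{D}$'s and with every prefix having at least as many $\mathtt{U}$'s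 as $\mathtt{D}$'s. A peak is a consecutive occurrence $\mathtt{U}\mathtt{D}$; its height is $\#_\mathtt{U}(P)-\#_\mathtt{D}(P)$ where $P$ is the prefix ending with that $\mathtt{U}$. $\overline{\mathcal{M}}_{m}$ is the set of Motzkin paths of length $m$ with no peak of height $1$; $\#_\mathtt{U}(P)$ counts $\mathtt{U}$'s in $P$. *)

theory Defs
  imports Main
begin

text \<open>Points are 1, ..., n+1.  An arc is a triple (i, j, S): left endpoint i,
 right endpoint j, and S = the set of intermediate points the arc passes ABOVE
 (it passes below every other point of {i<..<j}).  Two arcs are identified iff
 these data agree, so triples with S a subset of {i<..<j} represent arcs exactly.\<close>

type_synonym arc = "nat \<times> nat \<times> nat set"

definition left_end :: "arc \<Rightarrow> nat" where "left_end a = fst a"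
definition right_end :: "arc \<Rightarrow> nat" where "right_end a = fst (snd a)"
definition above_set :: "arc \<Rightarrow> nat set" where "above_set a = snd (snd a)"

definition is_arc :: "nat \<Rightarrow> arc \<Rightarrow> bool" where
  "is_arc n a \<longleftrightarrow> 1 \<le> left_end a \<and> left_end a < right_end a \<and> right_end a \<le> n + 1
     \<and> above_set a \<subseteq> {left_end a<..<right_end a}"

definition arc_pos :: "arc \<Rightarrow> nat \<Rightarrow> int" where
  "arc_pos a k = (if k = left_end a \<or> k = right_end a then 0
                  else if k \<in> above_set a then 1 else -1)"

text \<open>Two (x-monotone) arcs are forced to cross in their interiors iff, on the common
 closed span, one is forced strictly above the other at some point and strictly below
 it at another point.\<close>
definition arcs_cross :: "arc \<Rightarrow> arc \<Rightarrow> bool" where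
  "arcs_cross a b \<longleftrightarrow>
     (\<exists>k k'. max (left_end a) (left_end b) \<le> k \<and> k \<le> min (right_end a) (right_end b)
          \<and> max (left_end a) (left_end b) \<le> k' \<and> k' \<le> min (right_end a) (right_end b)
          \<and> arc_pos a k > arc_pos b k \<and> arc_pos a k' < arc_pos b k')"

definition noncrossing_arc_diagram :: "nat \<Rightarrow> arc set \<Rightarrow> bool" where
  "noncrossing_arc_diagram n \<Delta> \<longleftrightarrow>
     (\<forall>a\<in>\<Delta>. is_arc n a) \<and>
     (\<forall>a\<in>\<Delta>. \<forall>b\<in>\<Delta>. a \<noteq> b \<longrightarrow>
        left_end a \<noteq> left_end b \<and> right_end a \<noteq> right_end b \<and> \<not> arcs_cross a b)"

definition cx_sortable :: "arc \<Rightarrow> bool" where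
  "cx_sortable a \<longleftrightarrow> above_set a = {k. left_end a < k \<and> k < right_end a \<and> odd k}"

definition MAD_cx :: "nat \<Rightarrow> arc set set" where
  "MAD_cx n = {\<Delta>. noncrossing_arc_diagram n \<Delta> \<and> (\<forall>a\<in>\<Delta>. cx_sortable a) \<and>
      (\<forall>\<Delta>'. noncrossing_arc_diagram n \<Delta>' \<and> (\<forall>a\<in>\<Delta>'. cx_sortable a) \<and> \<Delta> \<subseteq> \<Delta>'
             \<longrightarrow> \<Delta>' = \<Delta>)}"

datatype step = U | D | H

definition Psi :: "nat \<Rightarrow> arc set \<Rightarrow> step list" where
  "Psi n \<Delta> = map (\<lambda>i. if i \<le> n \<and> i + 1 \<notin> right_end ` \<Delta> then U
                      else if 2 \<le> i \<and> i - 1 \<notin> left_end ` \<Delta> then D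
                      else H) [1..<n+2]"

definition cnt :: "step \<Rightarrow> step list \<Rightarrow> nat" where
  "cnt s w = length (filter (\<lambda>x. x = s) w)"

definition motzkin_path :: "nat \<Rightarrow> step list \<Rightarrow> bool" where
  "motzkin_path m w \<longleftrightarrow> length w = m \<and> cnt U w = cnt D w \<and>
     (\<forall>p \<le> length w. cnt D (take p w) \<le> cnt U (take p w))"

definition has_peak_of_height :: "int \<Rightarrow> step list \<Rightarrow> bool" where
  "has_peak_of_height h w \<longleftrightarrow> (\<exists>k. k + 1 < length w \<and> w ! k = U \<and> w ! (k + 1) = D \<and>
      int (cnt U (take (k + 1) w)) - int (cnt D (take (k + 1) w)) = h)"

definition Mbar :: "nat \<Rightarrow> step list set" where
  "Mbar m = {w. motzkin_path m w \<and> \<not> has_peak_of_height 1 w}"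

end

theory Submission
  imports Defs
begin

(* Maximality of \<delta> forces two local configurations, in each case because otherwise a short
   c-cross-sortable arc could be added without creating a crossing: if m is not a left endpoint,
   then m + 2 is a right endpoint (else add the arc from m to m + 2); and if i is not a left
   endpoint and i + 1 is not a right endpoint, then some arc of \<delta> passes over both (else add the
   arc from i to i + 1).  Reading \<Psi>(\<delta>) from the left, the U's among the first p steps number p
   minus the right endpoints up to p + 1, and the first configuration makes the D's among the
   first p + 1 steps number p minus the left endpoints up to p.  As every right endpoint is
   preceded by its left endpoint, the path stays weakly above the axis and ends on it after
   n - |\<delta>| up steps, and a peak of height 1 would sit exactly at a gap i, i + 1 over which no arc
   passes. *)

lemma arcs_cross_commute: "arcs_cross a b \<longleftrightarrow> arcs_cross b a"
  unfolding arcs_cross_def by (metis max.commute min.commute)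

lemma arc_pos_cx_sortable:
  assumes "cx_sortable a" "left_end a < k" "k < right_end a"
  shows "arc_pos a k = (if odd k then 1 else -1)"
  using assms unfolding cx_sortable_def arc_pos_def by auto

(* Two c-cross-sortable arcs have the same position at every point interior to both, so they
   can only differ at the two ends of their common span. *)
lemma cx_sortable_arcs_cross_parity:
  assumes sorted: "cx_sortable a" "cx_sortable b" and ends: "left_end a < left_end b"
    "right_end a \<noteq> right_end b" and cross: "arcs_cross a b"
  shows "left_end b < right_end a"
    and "right_end a < right_end b \<Longrightarrow> even (left_end b + right_end a)"
    and "right_end b < right_end a \<Longrightarrow> odd (left_end b + right_end b)"
proof -
  define l r where "l = left_end b" and "r = min (right_end a) (right_end b)"
  obtain k k' where span: "l \<le> k" "k \<le> r" "l \<le> k'" "k' \<le> r"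
    and above: "arc_pos a k > arc_pos b k" and below: "arc_pos a k' < arc_pos b k'"
    using ends(1) cross unfolding arcs_cross_def l_def r_def by auto
  have "arc_pos a j = arc_pos b j" if "l < j" "j < r" for j
    using that ends(1) arc_pos_cx_sortable[OF sorted(1), of j] arc_pos_cx_sortable[OF sorted(2), of j]
    unfolding l_def r_def by simp
  then have kk': "k \<in> {l, r}" "k' \<in> {l, r}" "k \<noteq> k'"
    using span above below by (fastforce simp: order_le_less)+
  then have "(arc_pos a l - arc_pos b l) * (arc_pos a r - arc_pos b r) < 0"
    using above below by (auto simp: mult_pos_neg mult_neg_pos)
  moreover from kk' span have "l < r" by auto
  then show lr: "left_end b < right_end a" unfolding l_def r_def by simp
  have "arc_pos a l - arc_pos b l = (if odd l then 1 else -1)"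
    using arc_pos_cx_sortable[OF sorted(1), of l] ends(1) lr unfolding l_def
    by (simp add: arc_pos_def)
  ultimately have opposite: "(if odd l then 1 else -1) * (arc_pos a r - arc_pos b r) < (0::int)"
    by simp
  show "even (left_end b + right_end a)" if "right_end a < right_end b"
  proof -
    have "arc_pos a r - arc_pos b r = (if odd r then -1 else 1)"
      using arc_pos_cx_sortable[OF sorted(2), of r] lr that unfolding l_def r_def
      by (simp add: arc_pos_def)
    then show ?thesis using opposite that unfolding l_def r_def by (auto split: if_splits)
  qed
  show "odd (left_end b + right_end b)" if "right_end b < right_end a"
  proof -
    have "arc_pos a r - arc_pos b r = (if odd r then 1 else -1)"
      using arc_pos_cx_sortable[OF sorted(1), of r] \<open>l < r\<close> ends(1) that unfolding l_def r_def
      by (simp add: arc_pos_def)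
    then show ?thesis using opposite that unfolding l_def r_def by (auto split: if_splits)
  qed
qed

lemma noncrossing_arc_diagram_inj_on_ends:
  assumes "noncrossing_arc_diagram n \<delta>"
  shows "inj_on left_end \<delta>" and "inj_on right_end \<delta>"
  using assms unfolding noncrossing_arc_diagram_def inj_on_def by blast+

lemma noncrossing_arc_diagram_finite:
  assumes "noncrossing_arc_diagram n \<delta>"
  shows "finite \<delta>"
proof -
  have "right_end ` \<delta> \<subseteq> {..n + 1}"
    using assms unfolding noncrossing_arc_diagram_def is_arc_def by auto
  then show ?thesis
    using noncrossing_arc_diagram_inj_on_ends(2)[OF assms] finite_imageD finite_subset by blast
qed

lemma card_image_Int_atMost:
  assumes "inj_on e A"
  shows "card (e ` A \<inter> {..p}) = card {a\<in>A. e a \<le> p}"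
proof -
  have "e ` A \<inter> {..p} = e ` {a\<in>A. e a \<le> p}" by auto
  then show ?thesis using assms by (simp add: card_image inj_on_subset)
qed

lemma noncrossing_arc_diagram_right_ends_lag:
  assumes "noncrossing_arc_diagram n \<delta>"
  shows "card (right_end ` \<delta> \<inter> {..Suc p}) \<le> card (left_end ` \<delta> \<inter> {..p})"
proof -
  have "{a\<in>\<delta>. right_end a \<le> Suc p} \<subseteq> {a\<in>\<delta>. left_end a \<le> p}"
    using assms unfolding noncrossing_arc_diagram_def is_arc_def by fastforce
  then show ?thesis
    using noncrossing_arc_diagram_finite[OF assms] noncrossing_arc_diagram_inj_on_ends[OF assms]
    by (simp add: card_image_Int_atMost card_mono)
qed

lemma MAD_cxD:
  assumes "\<delta> \<in> MAD_cx n" "b \<in> \<delta>"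
  shows "cx_sortable b" and "left_end b < right_end b"
  using assms unfolding MAD_cx_def noncrossing_arc_diagram_def is_arc_def by auto

lemma MAD_cx_maximal:
  assumes MAD: "\<delta> \<in> MAD_cx n" and "is_arc n a" "cx_sortable a"
    and fresh: "\<forall>b\<in>\<delta>. left_end b \<noteq> left_end a \<and> right_end b \<noteq> right_end a \<and> \<not> arcs_cross a b"
  shows "a \<in> \<delta>"
proof -
  have diagram: "noncrossing_arc_diagram n \<delta>" and sorted: "\<forall>b\<in>\<delta>. cx_sortable b"
    and maximal: "\<And>\<Delta>'. noncrossing_arc_diagram n \<Delta>' \<Longrightarrow> \<forall>b\<in>\<Delta>'. cx_sortable b \<Longrightarrow> \<delta> \<subseteq> \<Delta>' \<Longrightarrow> \<Delta>' = \<delta>"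
    using MAD unfolding MAD_cx_def by blast+
  have "noncrossing_arc_diagram n (insert a \<delta>)"
    unfolding noncrossing_arc_diagram_def
  proof (rule conjI; intro ballI impI)
    show "is_arc n x" if "x \<in> insert a \<delta>" for x
      using that diagram \<open>is_arc n a\<close> unfolding noncrossing_arc_diagram_def by auto
    fix x y assume "x \<in> insert a \<delta>" "y \<in> insert a \<delta>" "x \<noteq> y"
    then consider "x = a" "y \<in> \<delta>" | "y = a" "x \<in> \<delta>" | "x \<in> \<delta>" "y \<in> \<delta>" by blast
    then show "left_end x \<noteq> left_end y \<and> right_end x \<noteq> right_end y \<and> \<not> arcs_cross x y"
    proof cases
      case 1
      then show ?thesis using fresh by metis
    next
      case 2
      then show ?thesis using fresh arcs_cross_commute by metis
    next
      case 3
      then show ?thesis using diagram \<open>x \<noteq> y\<close> unfolding noncrossing_arc_diagram_def by blast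
    qed
  qed
  then have "insert a \<delta> = \<delta>"
    using maximal sorted \<open>cx_sortable a\<close> by blast
  then show ?thesis by blast
qed

definition cx_arc :: "nat \<Rightarrow> nat \<Rightarrow> arc" where
  "cx_arc l r = (l, r, {k. l < k \<and> k < r \<and> odd k})"

lemma left_end_cx_arc [simp]: "left_end (cx_arc l r) = l"
  and right_end_cx_arc [simp]: "right_end (cx_arc l r) = r"
  unfolding cx_arc_def left_end_def right_end_def by simp_all

lemma cx_sortable_cx_arc: "cx_sortable (cx_arc l r)"
  unfolding cx_sortable_def by (simp add: cx_arc_def above_set_def left_end_def right_end_def)

lemma is_arc_cx_arc: "1 \<le> l \<Longrightarrow> l < r \<Longrightarrow> r \<le> n + 1 \<Longrightarrow> is_arc n (cx_arc l r)"
  unfolding is_arc_def by (auto simp: cx_arc_def above_set_def left_end_def right_end_def)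

lemma MAD_cx_crosses_free_cx_arc:
  assumes MAD: "\<delta> \<in> MAD_cx n" and "1 \<le> l" "l < r" "r \<le> n + 1"
    and left: "l \<notin> left_end ` \<delta>" and right: "r \<notin> right_end ` \<delta>"
  shows "\<exists>b\<in>\<delta>. arcs_cross (cx_arc l r) b"
proof (rule ccontr)
  assume "\<not> ?thesis"
  moreover have "left_end b \<noteq> l" "right_end b \<noteq> r" if "b \<in> \<delta>" for b
    using that left right by (metis image_eqI)+
  ultimately have "cx_arc l r \<in> \<delta>"
    using MAD_cx_maximal[OF MAD is_arc_cx_arc cx_sortable_cx_arc] assms(2-4) by simp
  then show False using left by (metis image_eqI left_end_cx_arc)
qed

lemma MAD_cx_left_end_or_right_end:
  assumes MAD: "\<delta> \<in> MAD_cx n" and "1 \<le> m" "m + 2 \<le> n + 1" and left: "m \<notin> left_end ` \<delta>"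
  shows "m + 2 \<in> right_end ` \<delta>"
proof (rule ccontr)
  assume right: "m + 2 \<notin> right_end ` \<delta>"
  then obtain b where "b \<in> \<delta>" and cross: "arcs_cross (cx_arc m (m + 2)) b"
    using MAD_cx_crosses_free_cx_arc[OF MAD _ _ _ left right] assms(2,3) by auto
  have b: "cx_sortable b" "left_end b < right_end b"
    using MAD_cxD[OF MAD \<open>b \<in> \<delta>\<close>] .
  have ends: "left_end b \<noteq> m" "right_end b \<noteq> m + 2"
    using \<open>b \<in> \<delta>\<close> left right by (metis rev_image_eqI)+
  show False
  proof (cases "left_end b < m")
    case True
    then have "m < right_end b" "right_end b < m + 2 \<Longrightarrow> even (m + right_end b)"
        "m + 2 < right_end b \<Longrightarrow> odd (m + (m + 2))"
      using cx_sortable_arcs_cross_parity[OF b(1) cx_sortable_cx_arc, of m "m + 2"] ends(2) cross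
      by (simp_all add: arcs_cross_commute)
    moreover have "right_end b = m + 1 \<or> m + 2 < right_end b"
      using \<open>m < right_end b\<close> ends(2) by linarith
    ultimately show False by auto
  next
    case False
    then have "left_end b < m + 2" "m + 2 < right_end b \<Longrightarrow> even (left_end b + (m + 2))"
      using cx_sortable_arcs_cross_parity[OF cx_sortable_cx_arc b(1), of m "m + 2"] ends cross
      by simp_all
    moreover have "left_end b = m + 1" "m + 2 < right_end b"
      using calculation(1) False b(2) ends by linarith+
    ultimately show False by simp
  qed
qed

lemma MAD_cx_arc_over_gap:
  assumes MAD: "\<delta> \<in> MAD_cx n" and "1 \<le> i" "i \<le> n"
    and left: "i \<notin> left_end ` \<delta>" and right: "i + 1 \<notin> right_end ` \<delta>"
  shows "\<exists>b\<in>\<delta>. left_end b < i \<and> i + 1 < right_end b"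
proof -
  obtain b where "b \<in> \<delta>" and cross: "arcs_cross (cx_arc i (i + 1)) b"
    using MAD_cx_crosses_free_cx_arc[OF MAD _ _ _ left right] assms(2,3) by auto
  have sorted: "cx_sortable b"
    using MAD_cxD(1)[OF MAD \<open>b \<in> \<delta>\<close>] .
  have ends: "left_end b \<noteq> i" "right_end b \<noteq> i + 1"
    using \<open>b \<in> \<delta>\<close> left right by (metis rev_image_eqI)+
  have "\<not> i < left_end b"
    using cx_sortable_arcs_cross_parity(1)[OF cx_sortable_cx_arc sorted, of i "i + 1"] ends(2) cross
    by auto
  then have "left_end b < i" using ends(1) by simp
  then have "i < right_end b"
    using cx_sortable_arcs_cross_parity(1)[OF sorted cx_sortable_cx_arc, of i "i + 1"] ends(2) cross
    by (simp add: arcs_cross_commute)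
  then have "i + 1 < right_end b" using ends(2) by linarith
  then show ?thesis using \<open>b \<in> \<delta>\<close> \<open>left_end b < i\<close> by blast
qed

lemma cnt_snoc: "cnt s (xs @ [x]) = cnt s xs + (if x = s then 1 else 0)"
  unfolding cnt_def by simp

lemma cnt_take_mono:
  assumes "p \<le> q"
  shows "cnt s (take p xs) \<le> cnt s (take q xs)"
proof -
  have "take q xs = take p xs @ drop p (take q xs)"
    using assms by (metis append_take_drop_id min_absorb1 take_take)
  then show ?thesis unfolding cnt_def by (metis filter_append le_add1 length_append)
qed

lemma card_Int_atMost_Suc:
  "card (X \<inter> {..Suc p}) = card (X \<inter> {..p}) + (if Suc p \<in> X then 1 else 0)"
  by (simp add: atMost_Suc)

definition endpoint_step :: "nat \<Rightarrow> nat set \<Rightarrow> nat set \<Rightarrow> nat \<Rightarrow> step" where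
  "endpoint_step n L R i =
     (if i \<le> n \<and> i + 1 \<notin> R then U else if 2 \<le> i \<and> i - 1 \<notin> L then D else H)"

definition endpoint_word :: "nat \<Rightarrow> nat set \<Rightarrow> nat set \<Rightarrow> step list" where
  "endpoint_word n L R = map (endpoint_step n L R) [1..<n+2]"

lemma Psi_eq_endpoint_word: "Psi n \<delta> = endpoint_word n (left_end ` \<delta>) (right_end ` \<delta>)"
  unfolding Psi_def endpoint_word_def endpoint_step_def ..

lemma length_endpoint_word [simp]: "length (endpoint_word n L R) = n + 1"
  unfolding endpoint_word_def by simp

lemma nth_endpoint_word:
  "p \<le> n \<Longrightarrow> endpoint_word n L R ! p = endpoint_step n L R (Suc p)"
  unfolding endpoint_word_def by (simp del: upt_Suc)

lemma take_Suc_endpoint_word: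
  "p \<le> n \<Longrightarrow>
    take (Suc p) (endpoint_word n L R) = take p (endpoint_word n L R) @ [endpoint_step n L R (Suc p)]"
  by (simp add: take_Suc_conv_app_nth nth_endpoint_word)

locale endpoint_sets =
  fixes n :: nat and L R :: "nat set"
  assumes left_ends_bounded: "L \<subseteq> {1..n}"
    and right_ends_bounded: "R \<subseteq> {2..n + 1}"
    and card_ends_eq: "card L = card R"
    and right_ends_lag: "\<And>p. card (R \<inter> {..Suc p}) \<le> card (L \<inter> {..p})"
    and left_end_or_right_end: "\<And>m. 1 \<le> m \<Longrightarrow> m + 2 \<le> n + 1 \<Longrightarrow> m \<notin> L \<Longrightarrow> m + 2 \<in> R"
    and left_ends_ahead_at_gap: "\<And>i. 1 \<le> i \<Longrightarrow> i \<le> n \<Longrightarrow> i \<notin> L \<Longrightarrow> i + 1 \<notin> R \<Longrightarrow>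
      card (R \<inter> {..i}) < card (L \<inter> {..i})"
begin

abbreviation word :: "step list" where "word \<equiv> endpoint_word n L R"

lemma cnt_U_take_word:
  "p \<le> n \<Longrightarrow> cnt U (take p word) + card (R \<inter> {..Suc p}) = p"
proof (induction p)
  case 0
  have "R \<inter> {..Suc 0} = {}" using right_ends_bounded by auto
  then show ?case by (simp add: cnt_def)
next
  case (Suc p)
  then have "endpoint_step n L R (Suc p) = U \<longleftrightarrow> Suc (Suc p) \<notin> R"
    by (simp add: endpoint_step_def)
  then show ?case
    using Suc take_Suc_endpoint_word[of p n L R]
    by (simp add: cnt_snoc card_Int_atMost_Suc[of R "Suc p"])
qed

lemma cnt_D_take_word:
  "p \<le> n \<Longrightarrow> cnt D (take (Suc p) word) + card (L \<inter> {..p}) = p"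
proof (induction p)
  case 0
  have "L \<inter> {..0} = {}" using left_ends_bounded by auto
  then show ?case by (simp add: take_Suc_endpoint_word cnt_def endpoint_step_def)
next
  case (Suc p)
  have "endpoint_step n L R (Suc (Suc p)) = D \<longleftrightarrow> Suc p \<notin> L"
    using left_end_or_right_end[of "Suc p"] by (auto simp: endpoint_step_def)
  then show ?case
    using Suc take_Suc_endpoint_word[of "Suc p" n L R]
    by (simp add: cnt_snoc card_Int_atMost_Suc[of L p])
qed

lemma cnt_U_word: "cnt U word + card L = n"
proof -
  have "cnt U word = cnt U (take n word @ [endpoint_step n L R (Suc n)])"
    using take_Suc_endpoint_word[of n n L R] by simp
  also have "\<dots> = cnt U (take n word)" by (simp add: cnt_snoc endpoint_step_def)
  finally have "cnt U word = cnt U (take n word)" .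
  moreover have "R \<inter> {..Suc n} = R" using right_ends_bounded by auto
  ultimately show ?thesis using cnt_U_take_word[of n] card_ends_eq by simp
qed

lemma cnt_D_word: "cnt D word + card L = n"
proof -
  have "take (Suc n) word = word" by simp
  moreover have "L \<inter> {..n} = L" using left_ends_bounded by auto
  ultimately show ?thesis using cnt_D_take_word[of n] by simp
qed

lemma motzkin_path_word: "motzkin_path (n + 1) word"
  unfolding motzkin_path_def
proof (intro conjI allI impI)
  show "cnt U word = cnt D word" using cnt_U_word cnt_D_word by simp
next
  fix p assume "p \<le> length word"
  then show "cnt D (take p word) \<le> cnt U (take p word)"
  proof (cases p)
    case (Suc q)
    then have "q \<le> n" using \<open>p \<le> length word\<close> by simp
    have "cnt D (take p word) \<le> cnt U (take q word)"
      using cnt_D_take_word[OF \<open>q \<le> n\<close>] cnt_U_take_word[OF \<open>q \<le> n\<close>] right_ends_lag[of q]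
      unfolding Suc by linarith
    also have "\<dots> \<le> cnt U (take p word)" using Suc by (simp add: cnt_take_mono)
    finally show ?thesis .
  qed (simp add: cnt_def)
qed simp

lemma no_peak_of_height_1_word: "\<not> has_peak_of_height 1 word"
proof
  assume "has_peak_of_height 1 word"
  then obtain k where k: "k + 1 < n + 1" "word ! k = U" "word ! (k + 1) = D"
    and height: "int (cnt U (take (k + 1) word)) - int (cnt D (take (k + 1) word)) = 1"
    unfolding has_peak_of_height_def by auto
  have "endpoint_step n L R (Suc k) = U" "endpoint_step n L R (Suc (Suc k)) = D"
    using k nth_endpoint_word[of k n L R] nth_endpoint_word[of "Suc k" n L R] by simp_all
  then have gap: "Suc k \<le> n" "Suc (Suc k) \<notin> R" "Suc k \<notin> L"
    by (auto simp: endpoint_step_def split: if_splits)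
  \<comment> \<open>At this peak the height after \<open>k + 1\<close> steps is \<open>1 + |L \<inter> {..k + 1}| - |R \<inter> {..k + 1}|\<close>.\<close>
  have "card (R \<inter> {..Suc k}) = card (L \<inter> {..Suc k})"
    using height cnt_U_take_word[OF gap(1)] cnt_D_take_word[of k] gap
      card_Int_atMost_Suc[of R "Suc k"] card_Int_atMost_Suc[of L k]
    by simp
  then show False using left_ends_ahead_at_gap[of "Suc k"] gap by simp
qed

lemma word_in_Mbar: "word \<in> Mbar (n + 1)"
  unfolding Mbar_def using motzkin_path_word no_peak_of_height_1_word by simp

end

lemma MAD_cx_endpoint_sets:
  assumes MAD: "\<delta> \<in> MAD_cx n"
  shows "endpoint_sets n (left_end ` \<delta>) (right_end ` \<delta>)"
proof
  have diagram: "noncrossing_arc_diagram n \<delta>" using MAD unfolding MAD_cx_def by simp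
  note inj = noncrossing_arc_diagram_inj_on_ends[OF diagram]
  have arcs: "is_arc n a" if "a \<in> \<delta>" for a
    using diagram that unfolding noncrossing_arc_diagram_def by simp
  show "left_end ` \<delta> \<subseteq> {1..n}" and "right_end ` \<delta> \<subseteq> {2..n + 1}"
    using arcs unfolding is_arc_def by fastforce+
  show "card (left_end ` \<delta>) = card (right_end ` \<delta>)"
    using inj by (simp add: card_image)
  show "card (right_end ` \<delta> \<inter> {..Suc p}) \<le> card (left_end ` \<delta> \<inter> {..p})" for p
    by (rule noncrossing_arc_diagram_right_ends_lag[OF diagram])
  show "m + 2 \<in> right_end ` \<delta>" if "1 \<le> m" "m + 2 \<le> n + 1" "m \<notin> left_end ` \<delta>" for m
    using MAD_cx_left_end_or_right_end[OF MAD that] .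
  show "card (right_end ` \<delta> \<inter> {..i}) < card (left_end ` \<delta> \<inter> {..i})"
    if gap: "1 \<le> i" "i \<le> n" "i \<notin> left_end ` \<delta>" "i + 1 \<notin> right_end ` \<delta>" for i
  proof -
    obtain b where "b \<in> \<delta>" "left_end b < i" "i + 1 < right_end b"
      using MAD_cx_arc_over_gap[OF MAD gap] by blast
    then have "b \<in> {a\<in>\<delta>. left_end a \<le> i}" "b \<notin> {a\<in>\<delta>. right_end a \<le> i}" by auto
    moreover have "{a\<in>\<delta>. right_end a \<le> i} \<subseteq> {a\<in>\<delta>. left_end a \<le> i}"
      using arcs unfolding is_arc_def by fastforce
    ultimately have "{a\<in>\<delta>. right_end a \<le> i} \<subset> {a\<in>\<delta>. left_end a \<le> i}"
      by blast
    then show ?thesis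
      using noncrossing_arc_diagram_finite[OF diagram] inj
      by (simp add: card_image_Int_atMost psubset_card_mono)
  qed
qed

theorem proposition8p9:
  fixes n :: nat and \<delta> :: "arc set"
  assumes "n \<ge> 1" and "\<delta> \<in> MAD_cx n"
  shows "Psi n \<delta> \<in> Mbar (n + 1) \<and> int (card \<delta>) = int n - int (cnt U (Psi n \<delta>))"
proof -
  interpret endpoint_sets n "left_end ` \<delta>" "right_end ` \<delta>"
    using assms(2) by (rule MAD_cx_endpoint_sets)
  have "noncrossing_arc_diagram n \<delta>" using assms(2) unfolding MAD_cx_def by simp
  then have "card (left_end ` \<delta>) = card \<delta>"
    by (simp add: card_image noncrossing_arc_diagram_inj_on_ends)
  then show ?thesis
    using word_in_Mbar cnt_U_word unfolding Psi_eq_endpoint_word by simp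
qed

end
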